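(* Let $0\le c\le1$. For every $n\in\mathbb{N}$, $\mathcal{L}(\{x\in\mathbb{I}\colon y_n(x)\le c\})=c$.
   Context: $\mathcal{L}$ is Lebesgue measure, $\mathbb{I}=(0,1)\setminus\mathbb{Q}$. Define $T\colon[0,1)\to[0,1)$ by: for $k\in\mathbb{N}$, $Tx=\lceil 1/x\rceil x-1$ if $x\in(\frac{1}{2k},\frac{1}{2k-1})$; $Tx=1-\lfloor 1/x\rfloor x$ if $x\in(\frac{1}{2k+1},\frac{1}{2k})$; $Tx=0$ if $x\in\{0\}\cup\{1/n\colon n\ge 2\}$. For $x\in(0,1)$ define $d_1(x)=\lceil 1/x\rceil$, $s_1(x)=1$ if $x\in[\frac{1}{2k},\frac{1}{2k-1})$ for some $k$, and $d_1(x)=\lfloor 1/x\rfloor$, $s_1(x)=-1$ if $x\in[\frac{1}{2k+1},\frac{1}{2k})$ for some $k$; $d_{n+1}(x)=d_1(T^nx)$, $s_{n+1}(x)=s_1(T^nx)$, $\epsilon_1(x)=1$, $\epsilon_{n+1}(x)=\prod_{k=1}^ns_k(x)$. For $x\in\mathbb{I}$ define $y_1(x)=x$ and, for $n\ge2$, $y_n(x)=(d_{n-1}(x)-1)T^{n-1}x$ if $\epsilon_n(x)=\epsilon_{n-1}(x)$, and $y_n(x)=(d_{n-1}(x)+1)T^{n-1}x$ if $\epsilon_n(x)=-\epsilon_{n-1}(x)$. *)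

theory Defs
  imports "HOL-Analysis.Analysis"
begin

text \<open>The map T on [0,1). Outside the listed open intervals (i.e. at 0, at 1/n, n \<ge> 2,
  and outside [0,1)) the value is 0.\<close>
definition T :: "real \<Rightarrow> real" where
  "T x = (if \<exists>k::nat. k \<ge> 1 \<and> 1 / (2 * real k) < x \<and> x < 1 / (2 * real k - 1)
          then real_of_int (ceiling (1 / x)) * x - 1
          else if \<exists>k::nat. k \<ge> 1 \<and> 1 / (2 * real k + 1) < x \<and> x < 1 / (2 * real k)
          then 1 - real_of_int (floor (1 / x)) * x
          else 0)"

text \<open>First digit and sign (only meaningful on (0,1); arbitrary value 0 elsewhere).\<close>
definition d1 :: "real \<Rightarrow> int" where
  "d1 x = (if \<exists>k::nat. k \<ge> 1 \<and> 1 / (2 * real k) \<le> x \<and> x < 1 / (2 * real k - 1)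
           then ceiling (1 / x)
           else if \<exists>k::nat. k \<ge> 1 \<and> 1 / (2 * real k + 1) \<le> x \<and> x < 1 / (2 * real k)
           then floor (1 / x)
           else 0)"

definition s1 :: "real \<Rightarrow> int" where
  "s1 x = (if \<exists>k::nat. k \<ge> 1 \<and> 1 / (2 * real k) \<le> x \<and> x < 1 / (2 * real k - 1)
           then 1
           else if \<exists>k::nat. k \<ge> 1 \<and> 1 / (2 * real k + 1) \<le> x \<and> x < 1 / (2 * real k)
           then -1
           else 0)"

text \<open>Indices start at 1: d n x = d1 (T^(n-1) x) for n \<ge> 1 (index 0 is unused).\<close>
definition d :: "nat \<Rightarrow> real \<Rightarrow> int" where
  "d n x = d1 ((T ^^ (n - 1)) x)"

definition s :: "nat \<Rightarrow> real \<Rightarrow> int" where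
  "s n x = s1 ((T ^^ (n - 1)) x)"

definition eps :: "nat \<Rightarrow> real \<Rightarrow> int" where
  "eps n x = (\<Prod>k\<in>{1..<n}. s k x)"

definition Irr :: "real set" where
  "Irr = {0<..<1} - \<rat>"

definition y :: "nat \<Rightarrow> real \<Rightarrow> real" where
  "y n x = (if n \<le> 1 then x
            else if eps n x = eps (n - 1) x
              then (real_of_int (d (n - 1) x) - 1) * (T ^^ (n - 1)) x
            else if eps n x = - eps (n - 1) x
              then (real_of_int (d (n - 1) x) + 1) * (T ^^ (n - 1)) x
            else 0)"

end

theory Submission
  imports Defs
begin

(* For irrational x and n >= 2 put z = T^(n-2) x and let k be such that 1/z lies in (2k-1, 2k+1),
   i.e. z lies in the cylinder I_k = [1/(2k+1), 1/(2k-1)]. Then y_n(x) = (d - s) T z with d = 2k,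
   which is (2k-1)(2kz-1) on the half of I_k where s = 1 and (2k+1)(1-2kz) on the half where
   s = -1. Hence y_n(x) <= c exactly when z lies in a subinterval of I_k of length c |I_k|.
   On each half of I_k the map T is affine with slope 2k or -2k and maps it onto (0, 1/(2k-1))
   or (0, 1/(2k+1)), a union of whole cylinders. By induction on m, the measure of the set of
   irrationals x with T^m x in [u,v] is therefore C_m(k) (v - u) whenever [u,v] lies in I_k.
   Summing over k, the measure of {y_n <= c} is c * sum_k C(k) |I_k| = c * L(Irr) = c. *)

lemma Irr_eq: "Irr = {0..1} - \<rat>"
  unfolding Irr_def by (auto simp: less_le)

lemma Irr_subset: "Irr \<subseteq> {0..1}"
  unfolding Irr_eq by blast

lemma Irr_strict_bounds:
  assumes "z \<in> Irr" "z \<in> {a..b}" "a \<in> \<rat>" "b \<in> \<rat>"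
  shows "a < z" "z < b"
  using assms unfolding Irr_def by (auto simp: less_le)

lemma Icc_Int_Icc_subset_Rats:
  fixes a b c d :: real
  assumes "b \<le> c" "b \<in> \<rat>"
  shows "{a..b} \<inter> {c..d} \<subseteq> \<rat>"
proof
  fix x assume "x \<in> {a..b} \<inter> {c..d}"
  then have "x = b" using assms(1) by auto
  then show "x \<in> \<rat>" using assms(2) by simp
qed

section \<open>Cylinders and the branches of T\<close>

(* cylinder j is the closure of {x. d1 x = 2 j}; its halves half_cylinder (2 j - 1) and
   half_cylinder (2 j) are where s1 x = 1 and s1 x = -1. Note that cylinder 0 = {1..-1} is empty. *)
definition half_cylinder :: "nat \<Rightarrow> real set" where
  "half_cylinder i = {1 / real (Suc i) .. 1 / real i}"

definition cylinder :: "nat \<Rightarrow> real set" where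
  "cylinder j = {1 / (2 * real j + 1) .. 1 / (2 * real j - 1)}"

lemma half_cylinder_odd:
  "k \<ge> 1 \<Longrightarrow> half_cylinder (2 * k - 1) = {1 / (2 * real k) .. 1 / (2 * real k - 1)}"
  by (simp add: half_cylinder_def)

lemma half_cylinder_even:
  "half_cylinder (2 * k) = {1 / (2 * real k + 1) .. 1 / (2 * real k)}"
  by (simp add: half_cylinder_def)

lemma cylinder_eq_Un:
  assumes "k \<ge> 1"
  shows "cylinder k = half_cylinder (2 * k) \<union> half_cylinder (2 * k - 1)"
proof -
  have "1 / (2 * real k + 1) \<le> 1 / (2 * real k)" "1 / (2 * real k) \<le> 1 / (2 * real k - 1)"
    using assms by (auto intro!: divide_left_mono)
  then show ?thesis
    unfolding cylinder_def half_cylinder_odd[OF assms] half_cylinder_even by (rule ivl_disj_un_two_touch(4)[symmetric])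
qed

lemma half_cylinder_disjoint:
  assumes "i \<noteq> i'"
  shows "half_cylinder i \<inter> half_cylinder i' \<subseteq> \<rat>"
proof -
  have *: "half_cylinder i' \<inter> half_cylinder i \<subseteq> \<rat>" if "i < i'" for i i'
    unfolding half_cylinder_def using that
    by (intro Icc_Int_Icc_subset_Rats divide_left_mono) auto
  from assms show ?thesis
    by (cases "i < i'") (use *[of i i'] *[of i' i] in \<open>auto simp: Int_commute\<close>)
qed

lemma cylinder_disjoint:
  assumes "j \<noteq> j'"
  shows "cylinder j \<inter> cylinder j' \<subseteq> \<rat>"
proof -
  have *: "cylinder j' \<inter> cylinder j \<subseteq> \<rat>" if "j < j'" for j j'
    unfolding cylinder_def using that
    by (intro Icc_Int_Icc_subset_Rats divide_left_mono) auto
  from assms show ?thesis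
    by (cases "j < j'") (use *[of j j'] *[of j' j] in \<open>auto simp: Int_commute\<close>)
qed

lemma cylinder_subset: "cylinder j \<subseteq> {0..1}"
  unfolding cylinder_def by (cases "j = 0") auto

lemma Irr_half_cylinder:
  assumes "z \<in> Irr"
  obtains i :: nat where "i \<ge> 1" "z \<in> half_cylinder i"
proof -
  have z: "0 < z" "z < 1" using assms by (auto simp: Irr_def)
  define i where "i = nat \<lfloor>1 / z\<rfloor>"
  have "1 < 1 / z" using z by simp
  then have i: "real i = of_int \<lfloor>1 / z\<rfloor>" "i \<ge> 1" unfolding i_def by linarith+
  then have "real i \<le> 1 / z" "1 / z \<le> real (Suc i)" by linarith+
  then show thesis using that[OF i(2)] z i(2) by (simp add: half_cylinder_def field_simps)
qed

lemma Irr_branches: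
  assumes "z \<in> Irr"
  obtains (plus) k where "k \<ge> 1" "z \<in> half_cylinder (2 * k - 1)"
    | (minus) k where "k \<ge> 1" "z \<in> half_cylinder (2 * k)"
proof -
  obtain i where i: "i \<ge> 1" "z \<in> half_cylinder i" using Irr_half_cylinder[OF assms] .
  show thesis
  proof (cases "even i")
    case True
    then obtain k where "i = 2 * k" by blast
    then show thesis using minus i by auto
  next
    case False
    then obtain b where "i = 2 * b + 1" by (rule oddE)
    then have "i = 2 * Suc b - 1" by simp
    then show thesis using plus[of "Suc b"] i by auto
  qed
qed

lemma plus_branch:
  assumes z: "z \<in> Irr" and k: "k \<ge> 1" and zk: "z \<in> half_cylinder (2 * k - 1)"
  shows "T z = 2 * real k * z - 1" "d1 z = 2 * int k" "s1 z = 1"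
    and "0 < T z" "T z \<le> 1 / (2 * real k - 1)"
proof -
  have "z \<in> {1 / (2 * real k) .. 1 / (2 * real k - 1)}" using zk half_cylinder_odd[OF k] by simp
  from Irr_strict_bounds[OF z this]
  have lo: "1 / (2 * real k) < z" and hi: "z < 1 / (2 * real k - 1)" by simp_all
  have "2 * real k - 1 < 1 / z" "1 / z < 2 * real k"
    using lo hi k by (simp_all add: field_simps)
  then have ceil: "\<lceil>1 / z\<rceil> = 2 * int k" by (simp add: ceiling_eq_iff)
  have "\<exists>k'::nat. k' \<ge> 1 \<and> 1 / (2 * real k') < z \<and> z < 1 / (2 * real k' - 1)"
    using lo hi k by blast
  then show T: "T z = 2 * real k * z - 1" unfolding T_def ceil by simp
  have "\<exists>k'::nat. k' \<ge> 1 \<and> 1 / (2 * real k') \<le> z \<and> z < 1 / (2 * real k' - 1)"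
    using lo hi k by force
  then show "d1 z = 2 * int k" "s1 z = 1" unfolding d1_def s1_def ceil by simp_all
  show "0 < T z" using lo k unfolding T by (simp add: field_simps)
  have "2 * real k * z - 1 \<le> 2 * real k * (1 / (2 * real k - 1)) - 1"
    using mult_left_mono[OF less_imp_le[OF hi], of "2 * real k"] by simp
  also have "\<dots> = 1 / (2 * real k - 1)" using k by (simp add: field_simps)
  finally show "T z \<le> 1 / (2 * real k - 1)" unfolding T .
qed

lemma minus_branch:
  assumes z: "z \<in> Irr" and k: "k \<ge> 1" and zk: "z \<in> half_cylinder (2 * k)"
  shows "T z = 1 - 2 * real k * z" "d1 z = 2 * int k" "s1 z = -1"
    and "0 < T z" "T z \<le> 1 / (2 * real k + 1)"
proof -
  have "z \<in> {1 / (2 * real k + 1) .. 1 / (2 * real k)}" using zk half_cylinder_even by simp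
  from Irr_strict_bounds[OF z this]
  have lo: "1 / (2 * real k + 1) < z" and hi: "z < 1 / (2 * real k)" by simp_all
  have "2 * real k < 1 / z" "1 / z < 2 * real k + 1"
    using lo hi k by (simp_all add: field_simps)
  then have floor: "\<lfloor>1 / z\<rfloor> = 2 * int k" by (simp add: floor_eq_iff)
  have not_plus: "\<not> (\<exists>k'::nat. k' \<ge> 1 \<and> 1 / (2 * real k') \<le> z \<and> z < 1 / (2 * real k' - 1))"
  proof
    assume "\<exists>k'::nat. k' \<ge> 1 \<and> 1 / (2 * real k') \<le> z \<and> z < 1 / (2 * real k' - 1)"
    then obtain k' where k': "k' \<ge> 1" "z \<in> half_cylinder (2 * k' - 1)"
      using half_cylinder_odd by fastforce
    have "2 * k' - 1 \<noteq> 2 * k" using k'(1) by presburger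
    then show False using half_cylinder_disjoint zk k'(2) z by (auto simp: Irr_def)
  qed
  then have not_plus': "\<not> (\<exists>k'::nat. k' \<ge> 1 \<and> 1 / (2 * real k') < z \<and> z < 1 / (2 * real k' - 1))"
    by (meson less_imp_le)
  have minus: "\<exists>k'::nat. k' \<ge> 1 \<and> 1 / (2 * real k' + 1) < z \<and> z < 1 / (2 * real k')"
    using lo hi k by blast
  show T: "T z = 1 - 2 * real k * z"
    unfolding T_def if_not_P[OF not_plus'] if_P[OF minus] floor by simp
  have minus': "\<exists>k'::nat. k' \<ge> 1 \<and> 1 / (2 * real k' + 1) \<le> z \<and> z < 1 / (2 * real k')"
    using lo hi k by force
  show "d1 z = 2 * int k" "s1 z = -1"
    unfolding d1_def s1_def if_not_P[OF not_plus] if_P[OF minus'] floor by simp_all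
  show "0 < T z" using hi k unfolding T by (simp add: field_simps)
  have "1 - 2 * real k * z \<le> 1 - 2 * real k * (1 / (2 * real k + 1))"
    using mult_left_mono[OF less_imp_le[OF lo], of "2 * real k"] by simp
  also have "\<dots> = 1 / (2 * real k + 1)" by (simp add: field_simps)
  finally show "T z \<le> 1 / (2 * real k + 1)" unfolding T .
qed

lemma T_Irr:
  assumes z: "z \<in> Irr"
  shows "T z \<in> Irr"
proof -
  have irr: "2 * real k * z \<notin> \<rat>" if "k \<ge> 1" for k
    using z that Rats_mult_iff[of "2 * real k" z] by (simp add: Irr_def)
  from z obtain k where k: "k \<ge> 1" and bounds: "0 < T z" "T z \<le> 1"
    and "T z = 2 * real k * z - 1 \<or> T z = 1 - 2 * real k * z"
  proof (cases rule: Irr_branches)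
    case (plus k)
    have "1 / (2 * real k - 1) \<le> 1" using plus(1) by simp
    then have "T z \<le> 1" using plus_branch(5)[OF z plus] by linarith
    then show thesis using that[OF plus(1)] plus_branch(1,4)[OF z plus] by blast
  next
    case (minus k)
    have "1 / (2 * real k + 1) \<le> 1" by simp
    then have "T z \<le> 1" using minus_branch(5)[OF z minus] by linarith
    then show thesis using that[OF minus(1)] minus_branch(1,4)[OF z minus] by blast
  qed
  then have "T z + 1 = 2 * real k * z \<or> 1 - T z = 2 * real k * z" by auto
  then have "T z \<notin> \<rat>" using irr[OF k] by (metis Rats_1 Rats_add Rats_diff)
  then show ?thesis using bounds unfolding Irr_eq by auto
qed

lemma funpow_T_Irr: "x \<in> Irr \<Longrightarrow> (T ^^ m) x \<in> Irr"
  by (induction m) (auto intro: T_Irr)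

section \<open>Preimages of intervals under iterates of T\<close>

definition iter_preimage :: "nat \<Rightarrow> real set \<Rightarrow> real set" where
  "iter_preimage m A = {x \<in> Irr. (T ^^ m) x \<in> A}"

lemma iter_preimage_subset: "iter_preimage m A \<subseteq> Irr"
  unfolding iter_preimage_def by blast

lemma iter_preimage_mono: "A \<subseteq> B \<Longrightarrow> iter_preimage m A \<subseteq> iter_preimage m B"
  unfolding iter_preimage_def by blast

lemma iter_preimage_disjoint:
  "A \<inter> B \<subseteq> \<rat> \<Longrightarrow> iter_preimage m A \<inter> iter_preimage m B = {}"
  unfolding iter_preimage_def using funpow_T_Irr by (fastforce simp: Irr_def)

lemma iter_preimage_0: "A \<subseteq> {0..1} \<Longrightarrow> iter_preimage 0 A = A - \<rat>"
  unfolding iter_preimage_def Irr_eq by auto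

lemma cylinder_bounds:
  assumes "u \<le> v" "{u..v} \<subseteq> cylinder j"
  shows "1 / (2 * real j + 1) \<le> u" "v \<le> 1 / (2 * real j - 1)" "0 \<le> u"
proof -
  show u: "1 / (2 * real j + 1) \<le> u" and "v \<le> 1 / (2 * real j - 1)"
    using assms unfolding cylinder_def by auto
  show "0 \<le> u" by (rule order_trans[OF _ u]) simp
qed

lemma plus_piece_subset:
  assumes uv: "u \<le> v" "{u..v} \<subseteq> cylinder j" and k: "k \<in> {1..j}"
  shows "{(1 + u) / (2 * real k) .. (1 + v) / (2 * real k)} \<subseteq> half_cylinder (2 * k - 1)"
proof -
  have k1: "k \<ge> 1" and "2 * real k - 1 \<le> 2 * real j - 1" using k by auto
  then have "v \<le> 1 / (2 * real k - 1)"
    using cylinder_bounds(2)[OF uv] by (smt (verit) divide_left_mono mult_pos_pos of_nat_1 of_nat_mono)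
  then have "v * (2 * real k - 1) \<le> 1" using k1 by (simp add: field_simps)
  then have "(1 + v) / (2 * real k) \<le> 1 / (2 * real k - 1)" using k1 by (simp add: field_simps)
  moreover have "1 / (2 * real k) \<le> (1 + u) / (2 * real k)"
    using cylinder_bounds(3)[OF uv] by (simp add: divide_right_mono)
  ultimately show ?thesis unfolding half_cylinder_odd[OF k1] by auto
qed

lemma minus_piece_subset:
  assumes uv: "u \<le> v" "{u..v} \<subseteq> cylinder j" and k: "k \<in> {1..<j}"
  shows "{(1 - v) / (2 * real k) .. (1 - u) / (2 * real k)} \<subseteq> half_cylinder (2 * k)"
proof -
  have k1: "k \<ge> 1" and "2 * real k + 1 \<le> 2 * real j - 1" using k by auto
  then have "v \<le> 1 / (2 * real k + 1)"
    using cylinder_bounds(2)[OF uv] by (smt (verit) divide_left_mono mult_pos_pos of_nat_0_le_iff)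
  then have "v * (2 * real k + 1) \<le> 1" by (simp add: field_simps)
  then have "1 / (2 * real k + 1) \<le> (1 - v) / (2 * real k)" using k1 by (simp add: field_simps)
  moreover have "(1 - u) / (2 * real k) \<le> 1 / (2 * real k)"
    using cylinder_bounds(3)[OF uv] by (simp add: divide_right_mono)
  ultimately show ?thesis unfolding half_cylinder_even by auto
qed

lemma T_mem_Icc_iff:
  assumes z: "z \<in> Irr" and uv: "u \<le> v" "{u..v} \<subseteq> cylinder j"
  shows "T z \<in> {u..v} \<longleftrightarrow>
    (\<exists>k\<in>{1..j}. z \<in> {(1 + u) / (2 * real k) .. (1 + v) / (2 * real k)}) \<or>
    (\<exists>k\<in>{1..<j}. z \<in> {(1 - v) / (2 * real k) .. (1 - u) / (2 * real k)})"
proof -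
  have plus_iff: "z \<in> {(1 + u) / (2 * real k) .. (1 + v) / (2 * real k)} \<longleftrightarrow> 2 * real k * z - 1 \<in> {u..v}"
    if "k \<ge> 1" for k
    using that by (auto simp: field_simps)
  have minus_iff: "z \<in> {(1 - v) / (2 * real k) .. (1 - u) / (2 * real k)} \<longleftrightarrow> 1 - 2 * real k * z \<in> {u..v}"
    if "k \<ge> 1" for k
    using that by (auto simp: field_simps)
  show ?thesis
  proof
    assume Tz: "T z \<in> {u..v}"
    have "T z \<noteq> 1 / (2 * real j + 1)" using T_Irr[OF z] by (auto simp: Irr_def)
    then have low: "1 / (2 * real j + 1) < T z" using Tz cylinder_bounds(1)[OF uv] by auto
    from z show "(\<exists>k\<in>{1..j}. z \<in> {(1 + u) / (2 * real k) .. (1 + v) / (2 * real k)}) \<or>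
      (\<exists>k\<in>{1..<j}. z \<in> {(1 - v) / (2 * real k) .. (1 - u) / (2 * real k)})"
    proof (cases rule: Irr_branches)
      case (plus k)
      have "0 < 2 * real k - 1" using plus(1) by linarith
      moreover have "1 / (2 * real j + 1) < 1 / (2 * real k - 1)"
        using low plus_branch(5)[OF z plus] by linarith
      ultimately have "k \<le> j" by (simp add: field_simps)
      then show ?thesis using Tz plus(1) plus_iff plus_branch(1)[OF z plus] by auto
    next
      case (minus k)
      have "1 / (2 * real j + 1) < 1 / (2 * real k + 1)"
        using low minus_branch(5)[OF z minus] by linarith
      then have "k < j" by (simp add: field_simps)
      then show ?thesis using Tz minus(1) minus_iff minus_branch(1)[OF z minus] by auto
    qed
  next
    assume "(\<exists>k\<in>{1..j}. z \<in> {(1 + u) / (2 * real k) .. (1 + v) / (2 * real k)}) \<or>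
      (\<exists>k\<in>{1..<j}. z \<in> {(1 - v) / (2 * real k) .. (1 - u) / (2 * real k)})"
    then show "T z \<in> {u..v}"
    proof (elim disjE bexE)
      fix k assume k: "k \<in> {1..j}" and zk: "z \<in> {(1 + u) / (2 * real k) .. (1 + v) / (2 * real k)}"
      have "z \<in> half_cylinder (2 * k - 1)" using plus_piece_subset[OF uv k] zk by blast
      then show ?thesis using plus_branch(1)[OF z] plus_iff zk k by auto
    next
      fix k assume k: "k \<in> {1..<j}" and zk: "z \<in> {(1 - v) / (2 * real k) .. (1 - u) / (2 * real k)}"
      have "z \<in> half_cylinder (2 * k)" using minus_piece_subset[OF uv k] zk by blast
      then show ?thesis using minus_branch(1)[OF z] minus_iff zk k by auto
    qed
  qed
qed

lemma iter_preimage_Suc: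
  assumes "u \<le> v" "{u..v} \<subseteq> cylinder j"
  shows "iter_preimage (Suc m) {u..v} =
    (\<Union>k\<in>{1..j}. iter_preimage m {(1 + u) / (2 * real k) .. (1 + v) / (2 * real k)}) \<union>
    (\<Union>k\<in>{1..<j}. iter_preimage m {(1 - v) / (2 * real k) .. (1 - u) / (2 * real k)})"
proof -
  have "x \<in> iter_preimage (Suc m) {u..v} \<longleftrightarrow>
    x \<in> (\<Union>k\<in>{1..j}. iter_preimage m {(1 + u) / (2 * real k) .. (1 + v) / (2 * real k)}) \<union>
      (\<Union>k\<in>{1..<j}. iter_preimage m {(1 - v) / (2 * real k) .. (1 - u) / (2 * real k)})" for x
  proof (cases "x \<in> Irr")
    case True
    then show ?thesis
      using T_mem_Icc_iff[OF funpow_T_Irr[OF True] assms, of m] by (simp add: iter_preimage_def)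
  qed (simp add: iter_preimage_def)
  then show ?thesis by blast
qed

section \<open>Constant density on cylinders\<close>

lemma Icc_minus_Rats:
  assumes "u \<le> v"
  shows "{u..v} - \<rat> \<in> sets lebesgue" "measure lebesgue ({u..v} - \<rat>) = v - u"
proof -
  have "\<rat> \<in> null_sets lebesgue"
    by (simp add: countable_rat countable_imp_null_set_lborel null_sets_completionI)
  then show "{u..v} - \<rat> \<in> sets lebesgue" "measure lebesgue ({u..v} - \<rat>) = v - u"
    using measure_Diff_null_set[of "{u..v}" lebesgue \<rat>] assms by auto
qed

lemma lmeasurable_subset_Irr:
  assumes "A \<in> sets lebesgue" "A \<subseteq> Irr"
  shows "A \<in> lmeasurable"
proof (rule bounded_set_imp_lmeasurable[OF _ assms(1)])
  have "A \<subseteq> {0..1}" using assms(2) Irr_subset by blast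
  then show "bounded A" by (rule bounded_subset[OF bounded_closed_interval])
qed

definition cylinder_density :: "nat \<Rightarrow> (nat \<Rightarrow> real) \<Rightarrow> bool" where
  "cylinder_density m C \<longleftrightarrow> (\<forall>j u v. u \<le> v \<longrightarrow> {u..v} \<subseteq> cylinder j \<longrightarrow>
     iter_preimage m {u..v} \<in> sets lebesgue \<and>
     measure lebesgue (iter_preimage m {u..v}) = C j * (v - u))"

lemma cylinder_density_0: "cylinder_density 0 (\<lambda>_. 1)"
  unfolding cylinder_density_def
proof (intro allI impI)
  fix j u v assume uv: "u \<le> v" "{u..v} \<subseteq> cylinder j"
  then have "iter_preimage 0 {u..v} = {u..v} - \<rat>"
    using cylinder_subset iter_preimage_0 by blast
  then show "iter_preimage 0 {u..v} \<in> sets lebesgue \<and>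
      measure lebesgue (iter_preimage 0 {u..v}) = 1 * (v - u)"
    using Icc_minus_Rats[OF uv(1)] by simp
qed

lemma iter_preimage_half_cylinders_disjoint:
  "i \<noteq> i' \<Longrightarrow> A \<subseteq> half_cylinder i \<Longrightarrow> B \<subseteq> half_cylinder i' \<Longrightarrow>
    iter_preimage m A \<inter> iter_preimage m B = {}"
  using iter_preimage_disjoint[OF half_cylinder_disjoint] iter_preimage_mono by blast

lemma cylinder_density_UN_half_cylinders:
  assumes C: "cylinder_density m C" and I: "finite I" "inj_on h I"
    and ab: "\<And>k. k \<in> I \<Longrightarrow> a k \<le> b k" "\<And>k. k \<in> I \<Longrightarrow> {a k..b k} \<subseteq> half_cylinder (h k)"
    and h: "\<And>k. k \<in> I \<Longrightarrow> half_cylinder (h k) \<subseteq> cylinder k"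
  shows "(\<Union>k\<in>I. iter_preimage m {a k..b k}) \<in> lmeasurable"
    and "measure lebesgue (\<Union>k\<in>I. iter_preimage m {a k..b k}) = (\<Sum>k\<in>I. C k * (b k - a k))"
proof -
  have piece: "iter_preimage m {a k..b k} \<in> lmeasurable \<and>
      measure lebesgue (iter_preimage m {a k..b k}) = C k * (b k - a k)" if "k \<in> I" for k
  proof -
    have "{a k..b k} \<subseteq> cylinder k" using ab(2) h that by blast
    then have "iter_preimage m {a k..b k} \<in> sets lebesgue \<and>
        measure lebesgue (iter_preimage m {a k..b k}) = C k * (b k - a k)"
      using C ab(1)[OF that] unfolding cylinder_density_def by blast
    then show ?thesis using lmeasurable_subset_Irr[OF _ iter_preimage_subset] by blast
  qed
  then show "(\<Union>k\<in>I. iter_preimage m {a k..b k}) \<in> lmeasurable"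
    using I(1) by (intro fmeasurable.finite_UN) auto
  have "pairwise (\<lambda>k k'. disjnt (iter_preimage m {a k..b k}) (iter_preimage m {a k'..b k'})) I"
    unfolding pairwise_def disjnt_def
  proof (intro ballI impI)
    fix k k' assume k: "k \<in> I" and k': "k' \<in> I" and "k \<noteq> k'"
    then have "h k \<noteq> h k'" using I(2) by (auto dest: inj_onD)
    then show "iter_preimage m {a k..b k} \<inter> iter_preimage m {a k'..b k'} = {}"
      by (rule iter_preimage_half_cylinders_disjoint[OF _ ab(2)[OF k] ab(2)[OF k']])
  qed
  then have "measure lebesgue (\<Union>k\<in>I. iter_preimage m {a k..b k}) =
      (\<Sum>k\<in>I. measure lebesgue (iter_preimage m {a k..b k}))"
    using I(1) piece by (intro measure_UNION') auto
  also have "\<dots> = (\<Sum>k\<in>I. C k * (b k - a k))" using piece by simp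
  finally show "measure lebesgue (\<Union>k\<in>I. iter_preimage m {a k..b k}) = (\<Sum>k\<in>I. C k * (b k - a k))" .
qed

lemma cylinder_density_Suc:
  assumes C: "cylinder_density m C"
  shows "cylinder_density (Suc m)
    (\<lambda>j. (\<Sum>k\<in>{1..j}. C k / (2 * real k)) + (\<Sum>k\<in>{1..<j}. C k / (2 * real k)))"
  unfolding cylinder_density_def
proof (intro allI impI)
  fix j u v assume uv: "u \<le> v" "{u..v} \<subseteq> cylinder j"
  define P where "P = (\<Union>k\<in>{1..j}. iter_preimage m {(1 + u) / (2 * real k) .. (1 + v) / (2 * real k)})"
  define M where "M = (\<Union>k\<in>{1..<j}. iter_preimage m {(1 - v) / (2 * real k) .. (1 - u) / (2 * real k)})"
  have piece_ends: "(1 + v) / (2 * real k) - (1 + u) / (2 * real k) = (v - u) / (2 * real k)"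
    "(1 - u) / (2 * real k) - (1 - v) / (2 * real k) = (v - u) / (2 * real k)"
    "(1 + u) / (2 * real k) \<le> (1 + v) / (2 * real k)" "(1 - v) / (2 * real k) \<le> (1 - u) / (2 * real k)" for k
    using uv(1) by (simp_all add: diff_divide_distrib[symmetric] divide_right_mono)
  have halves: "half_cylinder (2 * k - 1) \<subseteq> cylinder k" "half_cylinder (2 * k) \<subseteq> cylinder k"
    if "k \<ge> 1" for k
    using cylinder_eq_Un[OF that] by auto
  have inj: "inj_on (\<lambda>k. 2 * k - 1) {1..j}" "inj_on (\<lambda>k. 2 * k) {1..<j}" by (auto simp: inj_on_def)
  have P_pieces: "P \<in> lmeasurable"
    "measure lebesgue P = (\<Sum>k\<in>{1..j}. C k * ((1 + v) / (2 * real k) - (1 + u) / (2 * real k)))"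
    unfolding P_def using piece_ends(3) plus_piece_subset[OF uv] halves(1)
    by (intro cylinder_density_UN_half_cylinders[OF C finite_atLeastAtMost inj(1)]; simp)+
  have M_pieces: "M \<in> lmeasurable"
    "measure lebesgue M = (\<Sum>k\<in>{1..<j}. C k * ((1 - u) / (2 * real k) - (1 - v) / (2 * real k)))"
    unfolding M_def using piece_ends(4) minus_piece_subset[OF uv] halves(2)
    by (intro cylinder_density_UN_half_cylinders[OF C finite_atLeastLessThan inj(2)]; simp)+
  have "iter_preimage m {(1 + u) / (2 * real k) .. (1 + v) / (2 * real k)} \<inter>
      iter_preimage m {(1 - v) / (2 * real k') .. (1 - u) / (2 * real k')} = {}"
    if k: "k \<in> {1..j}" and k': "k' \<in> {1..<j}" for k k'
  proof -
    have "2 * k - 1 \<noteq> 2 * k'" using k by presburger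
    then show ?thesis
      by (rule iter_preimage_half_cylinders_disjoint[OF _ plus_piece_subset[OF uv k] minus_piece_subset[OF uv k']])
  qed
  then have "P \<inter> M = {}" unfolding P_def M_def by blast
  then have "measure lebesgue (iter_preimage (Suc m) {u..v}) = measure lebesgue P + measure lebesgue M"
    unfolding iter_preimage_Suc[OF uv] P_def[symmetric] M_def[symmetric]
    using measure_Un3[OF P_pieces(1) M_pieces(1)] by simp
  also have "\<dots> = ((\<Sum>k\<in>{1..j}. C k / (2 * real k)) + (\<Sum>k\<in>{1..<j}. C k / (2 * real k))) * (v - u)"
    unfolding P_pieces(2) M_pieces(2) piece_ends(1,2) by (simp add: sum_distrib_right distrib_right)
  finally show "iter_preimage (Suc m) {u..v} \<in> sets lebesgue \<and>
      measure lebesgue (iter_preimage (Suc m) {u..v}) =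
        ((\<Sum>k\<in>{1..j}. C k / (2 * real k)) + (\<Sum>k\<in>{1..<j}. C k / (2 * real k))) * (v - u)"
    using P_pieces(1) M_pieces(1) unfolding iter_preimage_Suc[OF uv] P_def[symmetric] M_def[symmetric]
    by auto
qed

lemma cylinder_density_exists: "\<exists>C. cylinder_density m C"
  by (induction m) (use cylinder_density_0 cylinder_density_Suc in blast)+

lemma cylinder_density_sums:
  assumes C: "cylinder_density m C"
    and uv: "\<And>j. j \<ge> 1 \<Longrightarrow> u j \<le> v j" "\<And>j. j \<ge> 1 \<Longrightarrow> {u j..v j} \<subseteq> cylinder j"
  shows "(\<Union>i. iter_preimage m {u (Suc i)..v (Suc i)}) \<in> sets lebesgue"
    and "(\<lambda>i. C (Suc i) * (v (Suc i) - u (Suc i))) sums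
      measure lebesgue (\<Union>i. iter_preimage m {u (Suc i)..v (Suc i)})"
proof -
  define A where "A i = iter_preimage m {u (Suc i)..v (Suc i)}" for i
  have A: "A i \<in> sets lebesgue \<and> measure lebesgue (A i) = C (Suc i) * (v (Suc i) - u (Suc i))" for i
    using C uv[of "Suc i"] unfolding cylinder_density_def A_def by simp
  have "disjoint_family A"
    unfolding disjoint_family_on_def A_def
  proof (intro ballI impI)
    fix i i' :: nat assume "i \<noteq> i'"
    then have "cylinder (Suc i) \<inter> cylinder (Suc i') \<subseteq> \<rat>" by (simp add: cylinder_disjoint)
    moreover have "{u (Suc i)..v (Suc i)} \<subseteq> cylinder (Suc i)" "{u (Suc i')..v (Suc i')} \<subseteq> cylinder (Suc i')"
      using uv(2) by simp_all
    ultimately have "{u (Suc i)..v (Suc i)} \<inter> {u (Suc i')..v (Suc i')} \<subseteq> \<rat>" by blast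
    then show "iter_preimage m {u (Suc i)..v (Suc i)} \<inter> iter_preimage m {u (Suc i')..v (Suc i')} = {}"
      by (rule iter_preimage_disjoint)
  qed
  moreover have UN: "(\<Union>i. A i) \<in> sets lebesgue" using A by auto
  moreover have "(\<Union>i. A i) \<in> lmeasurable"
    using UN iter_preimage_subset unfolding A_def by (blast intro: lmeasurable_subset_Irr)
  ultimately have "(\<lambda>i. measure lebesgue (A i)) sums measure lebesgue (\<Union>i. A i)"
    using A by (intro measure_UNION) (auto simp: fmeasurable_def)
  then show "(\<lambda>i. C (Suc i) * (v (Suc i) - u (Suc i))) sums
      measure lebesgue (\<Union>i. iter_preimage m {u (Suc i)..v (Suc i)})"
    using A unfolding A_def by simp
  show "(\<Union>i. iter_preimage m {u (Suc i)..v (Suc i)}) \<in> sets lebesgue"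
    using UN unfolding A_def .
qed

lemma Irr_eq_UN_cylinder: "Irr = (\<Union>i. iter_preimage m (cylinder (Suc i)))"
proof
  show "(\<Union>i. iter_preimage m (cylinder (Suc i))) \<subseteq> Irr" using iter_preimage_subset by blast
  show "Irr \<subseteq> (\<Union>i. iter_preimage m (cylinder (Suc i)))"
  proof
    fix x assume x: "x \<in> Irr"
    obtain k where k: "k \<ge> 1" "(T ^^ m) x \<in> cylinder k"
      using funpow_T_Irr[OF x, of m]
      by (cases rule: Irr_branches) (use cylinder_eq_Un in blast)+
    then have "x \<in> iter_preimage m (cylinder (Suc (k - 1)))" using x by (simp add: iter_preimage_def)
    then show "x \<in> (\<Union>i. iter_preimage m (cylinder (Suc i)))" by blast
  qed
qed

lemma measure_Irr: "measure lebesgue Irr = 1"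
  using Icc_minus_Rats[of 0 1] unfolding Irr_eq by simp

lemma cylinder_density_total:
  assumes C: "cylinder_density m C"
  shows "(\<lambda>i. C (Suc i) * (1 / (2 * real (Suc i) - 1) - 1 / (2 * real (Suc i) + 1))) sums 1"
proof -
  have "(\<lambda>i. C (Suc i) * (1 / (2 * real (Suc i) - 1) - 1 / (2 * real (Suc i) + 1))) sums
      measure lebesgue (\<Union>i. iter_preimage m {1 / (2 * real (Suc i) + 1) .. 1 / (2 * real (Suc i) - 1)})"
    by (rule cylinder_density_sums(2)[OF C]) (auto simp: cylinder_def intro!: divide_left_mono)
  then show ?thesis
    unfolding Irr_eq_UN_cylinder[of m, unfolded cylinder_def, symmetric] measure_Irr .
qed

section \<open>Sublevel sets of y\<close>

lemma s1_Irr: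
  assumes z: "z \<in> Irr"
  shows "s1 z = 1 \<or> s1 z = -1"
  using z by (cases rule: Irr_branches) (simp_all add: plus_branch(3)[OF z] minus_branch(3)[OF z])

lemma y_eq_digit_sign:
  assumes x: "x \<in> Irr" and n: "n \<ge> 2"
  shows "y n x = of_int (d1 ((T ^^ (n - 2)) x) - s1 ((T ^^ (n - 2)) x)) * T ((T ^^ (n - 2)) x)"
proof -
  define z where "z = (T ^^ (n - 2)) x"
  have "n - 1 = Suc (n - 2)" "n - 1 - 1 = n - 2" using n by simp_all
  then have Tz: "(T ^^ (n - 1)) x = T z" and ds: "d (n - 1) x = d1 z" "s (n - 1) x = s1 z"
    unfolding z_def d_def s_def by simp_all
  have "s k x \<noteq> 0" for k
    using s1_Irr[OF funpow_T_Irr[OF x]] unfolding s_def by (metis zero_neq_one zero_neq_neg_one)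
  then have eps_nonzero: "eps (n - 1) x \<noteq> 0" unfolding eps_def by simp
  have "{1..<n} = insert (n - 1) {1..<n - 1}" using n by auto
  then have eps_step: "eps n x = s1 z * eps (n - 1) x" unfolding eps_def ds(2)[symmetric] by simp
  have y: "y n x = (if eps n x = eps (n - 1) x then (of_int (d1 z) - 1) * T z
      else if eps n x = - eps (n - 1) x then (of_int (d1 z) + 1) * T z else 0)"
    using n unfolding y_def Tz ds by simp
  have "s1 z = 1 \<or> s1 z = -1" unfolding z_def by (rule s1_Irr[OF funpow_T_Irr[OF x]])
  then have "y n x = of_int (d1 z - s1 z) * T z"
  proof
    assume "s1 z = 1"
    then show ?thesis using y eps_step by simp
  next
    assume "s1 z = -1"
    then show ?thesis using y eps_step eps_nonzero by simp
  qed
  then show ?thesis unfolding z_def .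
qed

lemma y_eq_y2_funpow:
  assumes "x \<in> Irr" "n \<ge> 2"
  shows "y n x = y 2 ((T ^^ (n - 2)) x)"
  using y_eq_digit_sign[OF assms] y_eq_digit_sign[OF funpow_T_Irr[OF assms(1)], of 2] by simp

definition sublevel_lo :: "real \<Rightarrow> nat \<Rightarrow> real" where
  "sublevel_lo c k = (1 - c / (2 * real k + 1)) / (2 * real k)"

definition sublevel_hi :: "real \<Rightarrow> nat \<Rightarrow> real" where
  "sublevel_hi c k = (1 + c / (2 * real k - 1)) / (2 * real k)"

lemma sublevel_bounds:
  assumes k: "k \<ge> 1" and c: "0 \<le> c" "c \<le> 1"
  shows "1 / (2 * real k + 1) \<le> sublevel_lo c k" "sublevel_lo c k \<le> 1 / (2 * real k)"
    and "1 / (2 * real k) \<le> sublevel_hi c k" "sublevel_hi c k \<le> 1 / (2 * real k - 1)"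
proof -
  have "1 / (2 * real k + 1) = (1 - 1 / (2 * real k + 1)) / (2 * real k)"
    using k by (simp add: divide_simps)
  also have "\<dots> \<le> sublevel_lo c k"
    unfolding sublevel_lo_def using c by (simp add: divide_right_mono)
  finally show "1 / (2 * real k + 1) \<le> sublevel_lo c k" .
  show "sublevel_lo c k \<le> 1 / (2 * real k)"
    unfolding sublevel_lo_def using c by (simp add: divide_right_mono)
  show "1 / (2 * real k) \<le> sublevel_hi c k"
    unfolding sublevel_hi_def using c k by (simp add: divide_right_mono)
  have "c / (2 * real k - 1) \<le> 1 / (2 * real k - 1)" using c k by (simp add: divide_right_mono)
  then have "sublevel_hi c k \<le> (1 + 1 / (2 * real k - 1)) / (2 * real k)"
    unfolding sublevel_hi_def by (simp add: divide_right_mono)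
  also have "\<dots> = 1 / (2 * real k - 1)" using k by (simp add: divide_simps)
  finally show "sublevel_hi c k \<le> 1 / (2 * real k - 1)" .
qed

lemma sublevel_length:
  assumes "k \<ge> 1"
  shows "sublevel_hi c k - sublevel_lo c k = c * (1 / (2 * real k - 1) - 1 / (2 * real k + 1))"
proof -
  define K where "K = 2 * real k"
  have K: "K - 1 \<noteq> 0" "K + 1 \<noteq> 0" "K \<noteq> 0" using assms unfolding K_def by auto
  have "(1 + c / (K - 1)) / K - (1 - c / (K + 1)) / K = (c / (K - 1) + c / (K + 1)) / K"
    by (simp add: diff_divide_distrib[symmetric])
  also have "\<dots> = c * (1 / (K - 1) - 1 / (K + 1))" using K by (simp add: divide_simps) algebra
  finally show ?thesis unfolding sublevel_hi_def sublevel_lo_def K_def .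
qed

lemma y2_le_iff:
  assumes z: "z \<in> Irr" and c: "0 \<le> c" "c \<le> 1"
  shows "y 2 z \<le> c \<longleftrightarrow> (\<exists>k\<ge>1. z \<in> {sublevel_lo c k .. sublevel_hi c k})"
proof -
  have y2: "y 2 z = of_int (d1 z - s1 z) * T z" using y_eq_digit_sign[OF z, of 2] by simp
  have unique: "(\<exists>k'\<ge>1. z \<in> {sublevel_lo c k' .. sublevel_hi c k'}) \<longleftrightarrow>
      z \<in> {sublevel_lo c k .. sublevel_hi c k}" if k: "k \<ge> 1" "z \<in> cylinder k" for k
  proof
    assume "\<exists>k'\<ge>1. z \<in> {sublevel_lo c k' .. sublevel_hi c k'}"
    then obtain k' where k': "k' \<ge> 1" "z \<in> {sublevel_lo c k' .. sublevel_hi c k'}" by blast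
    then have "z \<in> cylinder k'" using sublevel_bounds[OF k'(1) c] unfolding cylinder_def by auto
    then have "k' = k" using cylinder_disjoint[of k' k] k z by (auto simp: Irr_def)
    then show "z \<in> {sublevel_lo c k .. sublevel_hi c k}" using k' by simp
  qed (use k in blast)
  from z show ?thesis
  proof (cases rule: Irr_branches)
    case (plus k)
    note br = plus_branch[OF z plus]
    have K: "0 < 2 * real k - 1" "0 < 2 * real k" using plus(1) by auto
    have "y 2 z \<le> c \<longleftrightarrow> (2 * real k - 1) * (2 * real k * z - 1) \<le> c" using y2 br by simp
    also have "\<dots> \<longleftrightarrow> 2 * real k * z - 1 \<le> c / (2 * real k - 1)"
      using K by (simp add: pos_le_divide_eq mult.commute)
    also have "\<dots> \<longleftrightarrow> z * (2 * real k) \<le> 1 + c / (2 * real k - 1)" by (simp add: algebra_simps)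
    also have "\<dots> \<longleftrightarrow> z \<le> sublevel_hi c k"
      unfolding sublevel_hi_def using K by (simp add: pos_le_divide_eq)
    also have "\<dots> \<longleftrightarrow> z \<in> {sublevel_lo c k .. sublevel_hi c k}"
      using sublevel_bounds(2)[OF plus(1) c] plus(2) half_cylinder_odd[OF plus(1)] by auto
    finally show ?thesis using unique plus cylinder_eq_Un by blast
  next
    case (minus k)
    note br = minus_branch[OF z minus]
    have K: "0 < 2 * real k + 1" "0 < 2 * real k" using minus(1) by auto
    have "y 2 z \<le> c \<longleftrightarrow> (2 * real k + 1) * (1 - 2 * real k * z) \<le> c" using y2 br by simp
    also have "\<dots> \<longleftrightarrow> 1 - 2 * real k * z \<le> c / (2 * real k + 1)"
      using K by (simp add: pos_le_divide_eq mult.commute)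
    also have "\<dots> \<longleftrightarrow> 1 - c / (2 * real k + 1) \<le> z * (2 * real k)" by (simp add: algebra_simps)
    also have "\<dots> \<longleftrightarrow> sublevel_lo c k \<le> z"
      unfolding sublevel_lo_def using K by (simp add: pos_divide_le_eq)
    also have "\<dots> \<longleftrightarrow> z \<in> {sublevel_lo c k .. sublevel_hi c k}"
      using sublevel_bounds(3)[OF minus(1) c] minus(2) half_cylinder_even by auto
    finally show ?thesis using unique minus cylinder_eq_Un by blast
  qed
qed

lemma y_sublevel_set:
  assumes n: "n \<ge> 2" and c: "0 \<le> c" "c \<le> 1"
  shows "{x \<in> Irr. y n x \<le> c} =
    (\<Union>i. iter_preimage (n - 2) {sublevel_lo c (Suc i) .. sublevel_hi c (Suc i)})"
proof -
  have "(\<exists>k\<ge>1. P k) \<longleftrightarrow> (\<exists>i. P (Suc i))" for P :: "nat \<Rightarrow> bool"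
  proof
    assume "\<exists>k\<ge>1. P k"
    then obtain k where "k \<ge> 1" "P k" by blast
    then show "\<exists>i. P (Suc i)" by (intro exI[of _ "k - 1"]) simp
  qed auto
  then show ?thesis
    using y_eq_y2_funpow[OF _ n] y2_le_iff[OF funpow_T_Irr c] unfolding iter_preimage_def by auto
qed

theorem lemma3p4:
  fixes c :: real and n :: nat
  assumes "0 \<le> c" and "c \<le> 1" and "n \<ge> 1"
  shows "{x \<in> Irr. y n x \<le> c} \<in> sets lebesgue \<and> measure lebesgue {x \<in> Irr. y n x \<le> c} = c"
proof (cases "n = 1")
  case True
  then have "{x \<in> Irr. y n x \<le> c} = {0..c} - \<rat>" using assms(2) by (auto simp: y_def Irr_eq)
  then show ?thesis using Icc_minus_Rats[OF assms(1)] by simp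
next
  case False
  then have n: "n \<ge> 2" using assms(3) by simp
  obtain C where C: "cylinder_density (n - 2) C" using cylinder_density_exists by blast
  have "sublevel_lo c j \<le> sublevel_hi c j" "{sublevel_lo c j .. sublevel_hi c j} \<subseteq> cylinder j"
    if "j \<ge> 1" for j
    using sublevel_bounds[OF that assms(1,2)] unfolding cylinder_def by auto
  note level_set = cylinder_density_sums[OF C this, folded y_sublevel_set[OF n assms(1,2)]]
  have "(\<lambda>i. c * (C (Suc i) * (1 / (2 * real (Suc i) - 1) - 1 / (2 * real (Suc i) + 1)))) sums (c * 1)"
    by (rule sums_mult[OF cylinder_density_total[OF C]])
  then have "(\<lambda>i. C (Suc i) * (sublevel_hi c (Suc i) - sublevel_lo c (Suc i))) sums c"
    by (simp add: sublevel_length mult.left_commute)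
  then show ?thesis using level_set sums_unique2 by blast
qed

end
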